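(* Let $k$ be a field, $t\ge 1$, $d\ge 2$, and $n_1,\dots,n_t\ge 1$ integers, and put $N=\sum_{s=1}^t n_s$. Let $K^d_{n_1,\dots,n_t}$ be the $d$-complete multipartite hypergraph on the vertex set $B_1\sqcup\cdots\sqcup B_t$ with $|B_s|=n_s$. Then for every $i\ge 1$ and every $j$, $\beta_{i,j}(K^d_{n_1,\dots,n_t})$ is independent of the characteristic of $k$, and $$\beta_{i,j}(K^d_{n_1,\dots,n_t})=\begin{cases}\binom{N}{j}\binom{j-1}{d-1}-\displaystyle\sum_{\substack{(j_1,\dots,j_t)\in\mathbb N^t\\ j_1+\cdots+j_t=j}}\Big[\prod_{s=1}^t\binom{n_s}{j_s}\Big]\cdot\sum_{s=1}^t\binom{j_s-1}{d-1} & \text{if } j=i+(d-1),\\ 0 & \text{if } j\neq i+(d-1).\end{cases}$$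
   Context: A (simple) hypergraph on a finite vertex set $X$ is a collection of subsets of $X$ (edges), each of size at least $2$, none contained in another; its edge ideal $I(\mathcal H)\subseteq R=k[x_v:v\in X]$ is generated by the monomials $\prod_{v\in E}x_v$, $E$ an edge, and $\beta_{i,j}(\mathcal H)=\dim_k\mathrm{Tor}_i^R(R/I(\mathcal H),k)_j$. The $d$-complete multipartite hypergraph $K^d_{n_1,\dots,n_t}$ on $B_1\sqcup\cdots\sqcup B_t$ ($B_s$ pairwise disjoint, $|B_s|=n_s$) has as edges all $d$-element subsets of $B_1\sqcup\cdots\sqcup B_t$ except those contained in a single $B_s$. Convention: $\binom{a}{b}=0$ whenever $a<b$ (including negative $a$); $\mathbb N$ contains $0$. *)

theory Defs
  imports Complex_Main "HOL-Library.Function_Algebras"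
begin

text \<open>R = k[x_v : v in X]; monomials are exponent vectors b :: 'v => nat supported in X.
 Since I(H) is a monomial ideal, a monomial x^b lies in I(H) iff it is divisible by
 some generator prod_{v in E} x_v, E in H.\<close>

definition mono_in_edge_ideal :: "'v set set \<Rightarrow> ('v \<Rightarrow> nat) \<Rightarrow> bool" where
  "mono_in_edge_ideal H b \<longleftrightarrow> (\<exists>E\<in>H. \<forall>v\<in>E. 1 \<le> b v)"

text \<open>Tor_i^R(R/I,k) is computed by tensoring R/I with the Koszul resolution of k
 (the Koszul complex on x_v, v in X, with the sign convention coming from a linear
 order on X).  In multidegree a, the i-th chain group of (R/I) tensor K(x) has k-basis
 the elements e_F tensor x^(a - 1_F) with F subset of X, |F| = i, F contained in the support
 of a, and x^(a - 1_F) not in I.  Chains are encoded as k-valued functions on subsets F.\<close>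

definition kbasis :: "'v set \<Rightarrow> 'v set set \<Rightarrow> ('v \<Rightarrow> nat) \<Rightarrow> nat \<Rightarrow> 'v set set" where
  "kbasis X H a i = {F. F \<subseteq> X \<and> card F = i \<and> (\<forall>v\<in>F. 1 \<le> a v) \<and>
       \<not> mono_in_edge_ideal H (\<lambda>v. if v \<in> F then a v - 1 else a v)}"

definition kchains :: "'v set \<Rightarrow> 'v set set \<Rightarrow> ('v \<Rightarrow> nat) \<Rightarrow> nat \<Rightarrow> ('v set \<Rightarrow> 'k::field) set" where
  "kchains X H a i = {f. \<forall>F. f F \<noteq> 0 \<longrightarrow> F \<in> kbasis X H a i}"

text \<open>Koszul differential d_i : C_i \<rightarrow> C_(i-1),
  d(e_F tensor m) = sum_{v in F} (-1)^{#{u in F. u < v}} e_(F-v) tensor x_v m,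
 where terms whose monomial falls into I vanish; d_0 = 0.\<close>

definition kdiff :: "'v::linorder set \<Rightarrow> 'v set set \<Rightarrow> ('v \<Rightarrow> nat) \<Rightarrow> nat \<Rightarrow>
     ('v set \<Rightarrow> 'k::field) \<Rightarrow> ('v set \<Rightarrow> 'k)" where
  "kdiff X H a i f = (\<lambda>G. if i = 0 then 0 else
      if G \<in> kbasis X H a (i - 1) then
        (\<Sum>v\<in>X - G. if insert v G \<in> kbasis X H a i
            then (-1) ^ card {u\<in>G. u < v} * f (insert v G) else 0)
      else 0)"

abbreviation fscale :: "'k::field \<Rightarrow> ('v set \<Rightarrow> 'k) \<Rightarrow> ('v set \<Rightarrow> 'k)" where
  "fscale c f \<equiv> (\<lambda>x. c * f x)"

text \<open>Dimension over k of the multidegree-a part of Tor_i^R(R/I(H),k),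
 i.e. dim ker d_i - dim im d_(i+1).\<close>

definition tor_dim :: "'k::field itself \<Rightarrow> 'v::linorder set \<Rightarrow> 'v set set \<Rightarrow> nat \<Rightarrow> ('v \<Rightarrow> nat) \<Rightarrow> nat" where
  "tor_dim _ X H i a =
     vector_space.dim (fscale :: 'k \<Rightarrow> _)
        {f \<in> (kchains X H a i :: ('v set \<Rightarrow> 'k) set). kdiff X H a i f = 0}
   - vector_space.dim (fscale :: 'k \<Rightarrow> _)
        (kdiff X H a (Suc i) ` (kchains X H a (Suc i) :: ('v set \<Rightarrow> 'k) set))"

definition betti :: "'k::field itself \<Rightarrow> 'v::linorder set \<Rightarrow> 'v set set \<Rightarrow> nat \<Rightarrow> nat \<Rightarrow> nat" where
  "betti K X H i j = (\<Sum>a\<in>{a. (\<forall>v. v \<notin> X \<longrightarrow> a v = 0) \<and> (\<Sum>v\<in>X. a v) = j}. tor_dim K X H i a)"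

definition complete_multipartite_hg :: "nat \<Rightarrow> nat \<Rightarrow> (nat \<Rightarrow> 'v set) \<Rightarrow> 'v set set" where
  "complete_multipartite_hg d t B =
     {E. E \<subseteq> (\<Union>s\<in>{1..t}. B s) \<and> card E = d \<and> \<not> (\<exists>s\<in>{1..t}. E \<subseteq> B s)}"

end

(* In multidegree a, Tor_i(R/I, k) is the homology of a complex whose degree-i chains have as basis
   the i-sets F with x^(a - 1_F) not in I; this family of sets is closed under intervals, so the
   differential squares to zero.  If some exponent a_z is at least 2, membership in the family does
   not depend on z, the family is a cone with apex z and the complex is exact.  For a squarefree
   multidegree 1_S of the complete multipartite hypergraph, F belongs to the family iff S - F contains
   no edge, i.e. |S - F| < d or S - F lies in a single block.  Cones with apex Min S (when |S - F| < d)
   and the minimum of the block (when |S - F| >= d) show exactness except in degree |S| - d + 1, where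
   rank-nullity and alternating binomial sums give C(|S|-1, d-1) - sum_s C(|S n B_s|-1, d-1).
   Grouping the sets S by their block sizes yields the formula. *)

theory Submission
  imports Defs "HOL-Library.Disjoint_Sets" "HOL-Library.Indicator_Function" "HOL-Library.FuncSet"
begin

context vector_space
begin

lemma dim_le_dim_if_subset_finite_span:
  assumes "V \<subseteq> W" "W \<subseteq> span T" "finite T"
  shows "dim V \<le> dim W"
proof -
  obtain B where B: "B \<subseteq> V" "independent B" "V \<subseteq> span B" "card B = dim V"
    using basis_exists by blast
  obtain B' where B': "B \<subseteq> B'" "B' \<subseteq> W" "independent B'" "W \<subseteq> span B'"
    using maximal_independent_subset_extend[of B W] B assms by blast
  have "finite B'"
    using independent_span_bound[OF assms(3) B'(3)] B' assms by blast
  then have "card B \<le> card B'"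
    using B'(1) card_mono by blast
  with B B' show ?thesis
    using basis_card_eq_dim by auto
qed

lemma span_Int_span_eq_0:
  assumes "finite (S \<union> T)" "independent (S \<union> T)" "S \<inter> T = {}"
    and "x \<in> span S" "x \<in> span T"
  shows "x = 0"
proof -
  obtain u where u: "x = (\<Sum>s\<in>S. u s *s s)"
    using assms(1,4) span_finite[of S] by auto
  obtain w where w: "x = (\<Sum>t\<in>T. w t *s t)"
    using assms(1,5) span_finite[of T] by auto
  define z where "z b = (if b \<in> S then u b else - w b)" for b
  have "(\<Sum>t\<in>T. z t *s t) = - (\<Sum>t\<in>T. w t *s t)"
    using assms(3) by (auto simp: z_def sum_negf[symmetric] scale_minus_left disjoint_iff intro!: sum.cong)
  then have "(\<Sum>b\<in>S \<union> T. z b *s b) = (\<Sum>s\<in>S. u s *s s) - (\<Sum>t\<in>T. w t *s t)"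
    using assms(1,3) by (simp add: sum.union_disjoint z_def)
  then have "(\<Sum>b\<in>S \<union> T. z b *s b) = 0"
    using u w by simp
  then have "\<forall>b\<in>S \<union> T. z b = 0"
    using assms(1,2) dependent_finite by blast
  then have "\<forall>s\<in>S. u s = 0"
    unfolding z_def by (metis UnI1)
  then show ?thesis
    using u by simp
qed

end

context vector_space_pair
begin

lemma dim_image_span_kernel_complement:
  assumes f: "Vector_Spaces.linear s1 s2 f"
    and B: "finite (C \<union> B0)" "vs1.independent (C \<union> B0)" "C \<inter> B0 = {}"
    and kernel: "\<And>b. b \<in> B0 \<Longrightarrow> f b = 0" "{x \<in> vs1.span (C \<union> B0). f x = 0} \<subseteq> vs1.span B0"
  shows "vs2.dim (f ` vs1.span (C \<union> B0)) = card C"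
proof -
  interpret f: Vector_Spaces.linear s1 s2 f by (rule f)
  have inj: "inj_on f (vs1.span C)"
    unfolding f.inj_on_iff_eq_0[OF vs1.subspace_span]
  proof (intro ballI impI)
    fix x assume "x \<in> vs1.span C" "f x = 0"
    moreover have "vs1.span C \<subseteq> vs1.span (C \<union> B0)"
      by (simp add: vs1.span_mono)
    ultimately have "x \<in> vs1.span B0"
      using kernel(2) by blast
    then show "x = 0"
      using \<open>x \<in> vs1.span C\<close> B by (intro vs1.span_Int_span_eq_0[of C B0])
  qed
  have "vs1.independent C"
    using B(2) vs1.independent_mono by blast
  then have "vs2.independent (f ` C)"
    using inj by (rule f.independent_injective_image)
  moreover have "f ` vs1.span (C \<union> B0) = vs2.span (f ` C)"
    unfolding f.span_image[symmetric] image_Un vs2.span_eq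
    using kernel(1) by (auto intro: vs2.span_superset[THEN subsetD] vs2.span_zero)
  ultimately show ?thesis
    using vs2.dim_span_eq_card_independent card_image[OF inj_on_subset[OF inj vs1.span_superset]] by simp
qed

lemma rank_nullity_span:
  assumes f: "Vector_Spaces.linear s1 s2 f" and W: "finite W"
  shows "vs1.dim {x \<in> vs1.span W. f x = 0} + vs2.dim (f ` vs1.span W) = vs1.dim (vs1.span W)"
proof -
  let ?K = "{x \<in> vs1.span W. f x = 0}"
  obtain B0 where B0: "B0 \<subseteq> ?K" "vs1.independent B0" "?K \<subseteq> vs1.span B0" "card B0 = vs1.dim ?K"
    using vs1.basis_exists by blast
  obtain B where B: "B0 \<subseteq> B" "B \<subseteq> vs1.span W" "vs1.independent B" "vs1.span W \<subseteq> vs1.span B"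
    using vs1.maximal_independent_subset_extend[of B0 "vs1.span W"] B0 by blast
  have finB: "finite B"
    using vs1.independent_span_bound[OF W B(3)] B by blast
  have B_split: "B = (B - B0) \<union> B0" "(B - B0) \<inter> B0 = {}"
    using B(1) by auto
  have span_W: "vs1.span W = vs1.span B"
    by (rule equalityI[OF B(4) vs1.span_minimal[OF B(2) vs1.subspace_span]])
  have "vs2.dim (f ` vs1.span ((B - B0) \<union> B0)) = card (B - B0)"
    using B(3) B0(1,3) finB span_W B_split by (intro dim_image_span_kernel_complement[OF f]) auto
  then have "vs2.dim (f ` vs1.span W) = card (B - B0)"
    unfolding span_W B_split(1)[symmetric] .
  moreover have "card B = vs1.dim (vs1.span W)"
    using vs1.basis_card_eq_dim B by blast
  moreover have "card B0 \<le> card B"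
    using B(1) finB by (rule card_mono[rotated])
  ultimately show ?thesis
    using B0(4) B(1) finB by (simp add: card_Diff_subset finite_subset)
qed

end

interpretation fun_space: vector_space "\<lambda>c (f :: 'a \<Rightarrow> 'r::field) x. c * f x"
  by unfold_locales (simp_all add: fun_eq_iff algebra_simps)

interpretation fun_space_pair:
  vector_space_pair "\<lambda>c (f :: 'a \<Rightarrow> 'r::field) x. c * f x" "\<lambda>c (f :: 'b \<Rightarrow> 'r) x. c * f x" ..

definition chains_on :: "'a set \<Rightarrow> ('a \<Rightarrow> 'r::zero) set" where
  "chains_on P = {f. \<forall>F. f F \<noteq> 0 \<longrightarrow> F \<in> P}"

lemma sum_scaled_indicators_apply:
  "finite P \<Longrightarrow> (\<Sum>F\<in>P. (\<lambda>x. c F * indicator {F} x)) G = (if G \<in> P then c G else (0 :: 'r::comm_ring_1))"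
  by (induction P rule: finite_induct) (auto simp: indicator_def)

lemma chains_on_eq_span:
  assumes "finite P"
  shows "(chains_on P :: ('a \<Rightarrow> 'r::field) set) = fun_space.span ((\<lambda>F. indicator {F}) ` P)"
proof
  show "chains_on P \<subseteq> fun_space.span ((\<lambda>F. indicator {F} :: 'a \<Rightarrow> 'r) ` P)"
  proof
    fix f :: "'a \<Rightarrow> 'r" assume "f \<in> chains_on P"
    then have "f = (\<Sum>F\<in>P. (\<lambda>x. f F * indicator {F} x))"
      using assms by (auto simp: fun_eq_iff sum_scaled_indicators_apply chains_on_def)
    moreover have "(\<Sum>F\<in>P. (\<lambda>x. f F * indicator {F} x)) \<in> fun_space.span ((\<lambda>F. indicator {F}) ` P)"
      by (intro fun_space.span_sum fun_space.span_scale fun_space.span_base) auto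
    ultimately show "f \<in> fun_space.span ((\<lambda>F. indicator {F}) ` P)"
      by simp
  qed
next
  show "fun_space.span ((\<lambda>F. indicator {F}) ` P) \<subseteq> (chains_on P :: ('a \<Rightarrow> 'r) set)"
  proof (rule fun_space.span_minimal)
    show "fun_space.subspace (chains_on P)"
      by (auto simp: fun_space.subspace_def chains_on_def) (metis add.left_neutral)
  qed (auto simp: chains_on_def indicator_def)
qed

lemma independent_indicators:
  assumes "finite P"
  shows "fun_space.independent ((\<lambda>F. indicator {F} :: 'a \<Rightarrow> 'r::field) ` P)"
proof (rule fun_space.independent_if_scalars_zero)
  show "finite ((\<lambda>F. indicator {F} :: 'a \<Rightarrow> 'r) ` P)"
    using assms by simp
  have inj: "inj_on (\<lambda>F. indicator {F} :: 'a \<Rightarrow> 'r) P"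
    by (rule inj_onI) (metis indicator_eq_1_iff singletonD singletonI)
  fix c :: "('a \<Rightarrow> 'r) \<Rightarrow> 'r" and x :: "'a \<Rightarrow> 'r"
  assume "(\<Sum>y\<in>(\<lambda>F. indicator {F}) ` P. (\<lambda>z. c y * y z)) = 0" and x: "x \<in> (\<lambda>F. indicator {F}) ` P"
  then have "(\<Sum>F\<in>P. (\<lambda>z. c (indicator {F}) * indicator {F} z)) = 0"
    by (simp add: sum.reindex[OF inj])
  moreover obtain F where "F \<in> P" "x = indicator {F}"
    using x by auto
  ultimately show "c x = 0"
    using sum_scaled_indicators_apply[OF assms, of "\<lambda>F. c (indicator {F})" F] by simp
qed

lemma dim_chains_on:
  assumes "finite P"
  shows "fun_space.dim (chains_on P :: ('a \<Rightarrow> 'r::field) set) = card P"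
proof -
  have "inj_on (\<lambda>F. indicator {F} :: 'a \<Rightarrow> 'r) P"
    by (rule inj_onI) (metis indicator_eq_1_iff singletonD singletonI)
  then have "card ((\<lambda>F. indicator {F} :: 'a \<Rightarrow> 'r) ` P) = card P"
    by (rule card_image)
  moreover have "fun_space.dim (fun_space.span ((\<lambda>F. indicator {F} :: 'a \<Rightarrow> 'r) ` P))
      = card ((\<lambda>F. indicator {F} :: 'a \<Rightarrow> 'r) ` P)"
    by (rule fun_space.dim_span_eq_card_independent[OF independent_indicators[OF assms]])
  ultimately show ?thesis
    unfolding chains_on_eq_span[OF assms] by simp
qed

lemma rank_nullity_chains_on:
  fixes g :: "('a \<Rightarrow> 'r::field) \<Rightarrow> ('b \<Rightarrow> 'r)"
  assumes "Vector_Spaces.linear (\<lambda>c f x. c * f x) (\<lambda>c f x. c * f x) g" and "finite P"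
  shows "fun_space.dim {f \<in> chains_on P. g f = 0} + fun_space.dim (g ` chains_on P) = card P"
proof -
  have "fun_space.dim ((\<lambda>F. indicator {F} :: 'a \<Rightarrow> 'r) ` P) = card P"
    using dim_chains_on[OF assms(2)] chains_on_eq_span[OF assms(2)] by (metis fun_space.dim_span)
  then show ?thesis
    using fun_space_pair.rank_nullity_span[OF assms(1), of "(\<lambda>F. indicator {F}) ` P"] assms(2)
    by (simp add: chains_on_eq_span)
qed

definition koszul_sign :: "'v::linorder set \<Rightarrow> 'v \<Rightarrow> 'r::comm_ring_1" where
  "koszul_sign G v = (-1) ^ card {u\<in>G. u < v}"

definition koszul_boundary :: "'v::linorder set \<Rightarrow> ('v set \<Rightarrow> 'r::comm_ring_1) \<Rightarrow> 'v set \<Rightarrow> 'r" where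
  "koszul_boundary X f G = (\<Sum>v\<in>X - G. koszul_sign G v * f (insert v G))"

definition level :: "'a set set \<Rightarrow> nat \<Rightarrow> 'a set set" where
  "level P i = {F\<in>P. card F = i}"

definition koszul_diff ::
    "'v::linorder set \<Rightarrow> 'v set set \<Rightarrow> nat \<Rightarrow> ('v set \<Rightarrow> 'r::comm_ring_1) \<Rightarrow> ('v set \<Rightarrow> 'r)" where
  "koszul_diff X P i f =
     (\<lambda>G. if i = 0 then 0 else if G \<in> level P (i - 1) then koszul_boundary X f G else 0)"

definition koszul_cycles :: "'v::linorder set \<Rightarrow> 'v set set \<Rightarrow> nat \<Rightarrow> ('v set \<Rightarrow> 'r::comm_ring_1) set" where
  "koszul_cycles X P i = {f \<in> chains_on (level P i). koszul_diff X P i f = 0}"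

definition koszul_boundaries ::
    "'v::linorder set \<Rightarrow> 'v set set \<Rightarrow> nat \<Rightarrow> ('v set \<Rightarrow> 'r::comm_ring_1) set" where
  "koszul_boundaries X P i = koszul_diff X P (Suc i) ` chains_on (level P (Suc i))"

definition homology_dim :: "'r::field itself \<Rightarrow> 'v::linorder set \<Rightarrow> 'v set set \<Rightarrow> nat \<Rightarrow> nat" where
  "homology_dim _ X P i =
     fun_space.dim (koszul_cycles X P i :: ('v set \<Rightarrow> 'r) set)
     - fun_space.dim (koszul_boundaries X P i :: ('v set \<Rightarrow> 'r) set)"

definition interval_closed :: "'a set set \<Rightarrow> bool" where
  "interval_closed P \<longleftrightarrow> (\<forall>G M H. G \<in> P \<longrightarrow> H \<in> P \<longrightarrow> G \<subseteq> M \<longrightarrow> M \<subseteq> H \<longrightarrow> M \<in> P)"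

lemma finite_level: "finite X \<Longrightarrow> P \<subseteq> Pow X \<Longrightarrow> finite (level P i)"
  by (rule finite_subset[of _ "Pow X"]) (auto simp: level_def)

lemma koszul_sign_insert:
  assumes "finite G" "v \<notin> G"
  shows "koszul_sign (insert v G) w = (if v < w then - koszul_sign G w else koszul_sign G w)"
proof -
  have "{u\<in>insert v G. u < w} = (if v < w then insert v {u\<in>G. u < w} else {u\<in>G. u < w})"
    by auto
  then show ?thesis
    using assms by (simp add: koszul_sign_def)
qed

lemma koszul_sign_swap:
  assumes "finite G" "c \<notin> G" "v \<notin> G" "v \<noteq> c"
  shows "koszul_sign (insert c G) v * koszul_sign (insert v G) c = - (koszul_sign G c * koszul_sign G v :: 'r::comm_ring_1)"
  using assms by (cases "c < v") (auto simp: koszul_sign_insert)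

lemma koszul_sign_square: "koszul_sign G v * koszul_sign G v = (1 :: 'r::comm_ring_1)"
  by (simp add: koszul_sign_def flip: power_add)

lemma linear_koszul_diff: "Vector_Spaces.linear fscale fscale (koszul_diff X P i)"
proof -
  have "koszul_boundary X (f + g) G = koszul_boundary X f G + koszul_boundary X g G" for f g G
    by (simp add: koszul_boundary_def distrib_left sum.distrib)
  moreover have "koszul_boundary X (\<lambda>x. c * f x) G = c * koszul_boundary X f G" for c f G
    by (simp add: koszul_boundary_def sum_distrib_left mult.left_commute)
  ultimately show ?thesis
    unfolding Vector_Spaces.linear_iff
    by (auto simp: fun_space.vector_space_axioms koszul_diff_def fun_eq_iff)
qed

lemma koszul_diff_in_chains_on: "koszul_diff X P (Suc i) f \<in> chains_on (level P i)"
  by (auto simp: koszul_diff_def chains_on_def)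

lemma sum_antisymmetric_offdiagonal:
  fixes T :: "'a \<Rightarrow> 'a \<Rightarrow> 'b::ab_group_add"
  assumes "finite A" "\<And>v w. v \<in> A \<Longrightarrow> w \<in> A \<Longrightarrow> v \<noteq> w \<Longrightarrow> T v w = - T w v"
  shows "(\<Sum>v\<in>A. \<Sum>w\<in>A - {v}. T v w) = 0"
  using assms
proof (induction A rule: finite_induct)
  case empty
  then show ?case by simp
next
  case (insert x A)
  have IH: "(\<Sum>v\<in>A. \<Sum>w\<in>A - {v}. T v w) = 0"
    using insert.IH insert.prems by blast
  have row: "(\<Sum>w\<in>insert x A - {v}. T v w) = T v x + (\<Sum>w\<in>A - {v}. T v w)" if "v \<in> A" for v
  proof -
    have "insert x A - {v} = insert x (A - {v})"
      using that insert.hyps by auto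
    then show ?thesis
      using insert.hyps by simp
  qed
  have cancel: "T x w + T w x = 0" if "w \<in> A" for w
  proof -
    have "T x w = - T w x"
      using that insert.hyps by (intro insert.prems) auto
    then show ?thesis
      by simp
  qed
  have "(\<Sum>v\<in>insert x A. \<Sum>w\<in>insert x A - {v}. T v w)
      = (\<Sum>w\<in>A. T x w) + (\<Sum>v\<in>A. T v x + (\<Sum>w\<in>A - {v}. T v w))"
    using insert.hyps by (simp add: row)
  also have "\<dots> = (\<Sum>w\<in>A. T x w + T w x)"
    by (simp add: IH sum.distrib)
  also have "\<dots> = 0"
    by (simp add: cancel)
  finally show ?case .
qed

lemma koszul_boundary_boundary:
  assumes X: "finite X" and G: "finite G"
  shows "koszul_boundary X (koszul_boundary X f) G = 0"
proof -
  define T where "T v w = koszul_sign G v * koszul_sign (insert v G) w * f (insert w (insert v G))" for v w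
  have "koszul_boundary X (koszul_boundary X f) G = (\<Sum>v\<in>X - G. \<Sum>w\<in>(X - G) - {v}. T v w)"
  proof -
    have "X - insert v G = (X - G) - {v}" for v
      by auto
    then show ?thesis
      unfolding koszul_boundary_def T_def by (simp add: sum_distrib_left mult.assoc)
  qed
  also have "\<dots> = 0"
  proof (rule sum_antisymmetric_offdiagonal)
    fix v w assume "v \<in> X - G" "w \<in> X - G" "v \<noteq> w"
    moreover have "insert w (insert v G) = insert v (insert w G)"
      by auto
    ultimately show "T v w = - T w v"
      unfolding T_def using G by (auto simp: koszul_sign_insert)
  qed (use X in simp)
  finally show ?thesis .
qed

lemma koszul_diff_koszul_diff:
  assumes X: "finite X" and P: "P \<subseteq> Pow X" and closed: "interval_closed P"
    and f: "f \<in> chains_on (level P (Suc k))"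
  shows "koszul_diff X P k (koszul_diff X P (Suc k) f) = 0"
proof
  fix G
  show "koszul_diff X P k (koszul_diff X P (Suc k) f) G = 0 G"
  proof (cases "k \<noteq> 0 \<and> G \<in> level P (k - 1)")
    case False
    then show ?thesis
      by (auto simp: koszul_diff_def)
  next
    case True
    then have GP: "G \<in> P" "card G = k - 1"
      by (auto simp: level_def)
    have finG: "finite G"
      using GP P X finite_subset by blast
    have "koszul_diff X P (Suc k) f (insert v G) = koszul_boundary X f (insert v G)"
      if v: "v \<in> X - G" for v
    proof (cases "insert v G \<in> P")
      case True
      then show ?thesis
        using v finG GP \<open>k \<noteq> 0 \<and> _\<close> by (simp add: koszul_diff_def level_def)
    next
      case False
      have "f (insert w (insert v G)) = 0" for w
      proof (rule ccontr)
        assume "f (insert w (insert v G)) \<noteq> 0"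
        then have "insert w (insert v G) \<in> P"
          using f by (auto simp: chains_on_def level_def)
        then show False
          using False closed GP unfolding interval_closed_def by blast
      qed
      then show ?thesis
        using False by (simp add: koszul_diff_def level_def koszul_boundary_def)
    qed
    then have "koszul_diff X P k (koszul_diff X P (Suc k) f) G = koszul_boundary X (koszul_boundary X f) G"
      using True by (simp add: koszul_diff_def koszul_boundary_def)
    then show ?thesis
      using koszul_boundary_boundary[OF X finG] by simp
  qed
qed

lemma koszul_boundaries_subset_cycles:
  assumes "finite X" "P \<subseteq> Pow X" "interval_closed P"
  shows "koszul_boundaries X P i \<subseteq> koszul_cycles X P i"
  using koszul_diff_koszul_diff[OF assms] koszul_diff_in_chains_on
  by (auto simp: koszul_boundaries_def koszul_cycles_def)

(* A cone over the level i: c G is an apex for G, and lift is the cone construction, a contracting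
   homotopy with koszul_diff (lift f) = f for every cycle f. *)
locale koszul_contraction =
  fixes X :: "'v::linorder set" and P :: "'v set set" and i :: nat and c :: "'v set \<Rightarrow> 'v"
  assumes finite_X: "finite X" and P_subset: "P \<subseteq> Pow X"
    and apex_insert: "\<And>G v. G \<in> level P i \<Longrightarrow> v \<in> X - G \<Longrightarrow> insert v G \<in> P \<Longrightarrow> c (insert v G) = c G"
    and apex_notin: "\<And>G. G \<in> level P i \<Longrightarrow> c G \<notin> G \<Longrightarrow> c G \<in> X \<and> insert (c G) G \<in> P"
    and apex_in: "\<And>G. G \<in> level P i \<Longrightarrow> c G \<in> G \<Longrightarrow>
      G - {c G} \<in> P \<and> (\<forall>v\<in>X - G. insert v (G - {c G}) \<in> P \<longrightarrow> insert v G \<in> P)"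
begin

definition lift :: "('v set \<Rightarrow> 'r::comm_ring_1) \<Rightarrow> 'v set \<Rightarrow> 'r" where
  "lift f H = (if H \<in> level P (Suc i) \<and> c H \<in> H
     then koszul_sign (H - {c H}) (c H) * f (H - {c H}) else 0)"

lemma lift_in_chains_on: "lift f \<in> chains_on (level P (Suc i))"
  by (auto simp: lift_def chains_on_def)

lemma finite_level_member: "G \<in> level P k \<Longrightarrow> finite G"
  using P_subset finite_X by (auto simp: level_def intro: finite_subset)

lemma koszul_diff_lift_apex_notin:
  fixes f :: "'v set \<Rightarrow> 'r::comm_ring_1"
  assumes G: "G \<in> level P i" and notin: "c G \<notin> G"
  shows "koszul_diff X P (Suc i) (lift f) G = f G"
proof -
  have c: "c G \<in> X - G" "insert (c G) G \<in> P"
    using apex_notin[OF G notin] notin by auto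
  have card_insert: "card (insert v G) = Suc i" if "v \<in> X - G" for v
    using that G finite_level_member[OF G] by (simp add: level_def)
  have summand: "koszul_sign G v * lift f (insert v G) = (if v = c G then f G else 0)"
    if v: "v \<in> X - G" for v
  proof (cases "v = c G")
    case True
    have "insert (c G) G \<in> level P (Suc i)"
      using c card_insert[OF c(1)] by (simp add: level_def)
    moreover have "c (insert (c G) G) = c G" and "insert (c G) G - {c G} = G"
      using apex_insert[OF G c] notin by auto
    ultimately have "lift f (insert (c G) G) = koszul_sign G (c G) * f G"
      unfolding lift_def by simp
    then show ?thesis
      using True by (simp add: mult.assoc[symmetric] koszul_sign_square)
  next
    case False
    then have "lift f (insert v G) = 0"
      using apex_insert[OF G v] notin v by (auto simp: lift_def level_def)
    then show ?thesis
      using False by simp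
  qed
  show ?thesis
    using G c(1) finite_X by (simp add: koszul_diff_def koszul_boundary_def summand)
qed

lemma lift_insert_apex_in:
  fixes f :: "'v set \<Rightarrow> 'r::comm_ring_1"
  assumes G: "G \<in> level P i" and apex: "c G \<in> G" and f: "f \<in> chains_on (level P i)" and v: "v \<in> X - G"
  shows "lift f (insert v G) = koszul_sign (insert v (G - {c G})) (c G) * f (insert v (G - {c G}))"
proof (cases "insert v G \<in> P")
  case True
  moreover have "0 < card G"
    using apex finite_level_member[OF G] card_gt_0_iff by blast
  then have "card (insert v G) = Suc i" "card (insert v (G - {c G})) = i"
    using G apex v finite_level_member[OF G] by (auto simp: level_def)
  moreover have "insert v G - {c G} = insert v (G - {c G})"
    using v apex by auto
  ultimately show ?thesis
    using apex_insert[OF G v] apex by (simp add: lift_def level_def)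
next
  case False
  then have "f (insert v (G - {c G})) = 0"
    using f apex_in[OF G apex] v by (auto simp: chains_on_def level_def)
  then show ?thesis
    using False by (simp add: lift_def level_def)
qed

lemma koszul_diff_lift_apex_in:
  fixes f :: "'v set \<Rightarrow> 'r::comm_ring_1"
  assumes G: "G \<in> level P i" and apex: "c G \<in> G" and f: "f \<in> koszul_cycles X P i"
  shows "koszul_diff X P (Suc i) (lift f) G = f G"
proof -
  define c0 where "c0 = c G"
  define G' where "G' = G - {c0}"
  have G_eq: "G = insert c0 G'" "c0 \<notin> G'" and c0X: "c0 \<in> X"
    using apex G P_subset by (auto simp: c0_def G'_def level_def)
  have finG': "finite G'"
    using finite_level_member[OF G] G'_def by simp
  have "G' \<in> P"
    using apex_in[OF G apex] by (simp add: G'_def c0_def)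
  moreover have "card G' = i - 1" and i: "i \<noteq> 0"
    using G apex finite_level_member[OF G] by (auto simp: G'_def c0_def level_def card_gt_0_iff)
  ultimately have G': "G' \<in> level P (i - 1)"
    by (simp add: level_def)
  have summand: "koszul_sign G v * lift f (insert v G)
      = - (koszul_sign G' c0 * (koszul_sign G' v * f (insert v G')))"
    if v: "v \<in> X - G" for v
  proof -
    have "f \<in> chains_on (level P i)"
      using f by (simp add: koszul_cycles_def)
    then have "lift f (insert v G) = koszul_sign (insert v G') c0 * f (insert v G')"
      unfolding c0_def G'_def by (rule lift_insert_apex_in[OF G apex _ v])
    moreover have "koszul_sign G v * koszul_sign (insert v G') c0 = - (koszul_sign G' c0 * koszul_sign G' v :: 'r)"
      using koszul_sign_swap[OF finG' G_eq(2), of v] v G_eq by simp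
    ultimately show ?thesis
      by (simp add: mult.assoc[symmetric])
  qed
  have "koszul_diff X P i f G' = 0"
    using f by (simp add: koszul_cycles_def)
  then have "koszul_boundary X f G' = 0"
    using G' i by (simp add: koszul_diff_def)
  moreover have "X - G' = insert c0 (X - G)" "c0 \<notin> X - G"
    using G_eq c0X by auto
  then have "koszul_boundary X f G'
      = koszul_sign G' c0 * f G + (\<Sum>v\<in>X - G. koszul_sign G' v * f (insert v G'))"
    using finite_X by (simp add: koszul_boundary_def G_eq(1)[symmetric])
  ultimately have cycle: "(\<Sum>v\<in>X - G. koszul_sign G' v * f (insert v G')) = - (koszul_sign G' c0 * f G)"
    by (simp add: eq_neg_iff_add_eq_0 add.commute)
  have "koszul_diff X P (Suc i) (lift f) G = - (koszul_sign G' c0 * (\<Sum>v\<in>X - G. koszul_sign G' v * f (insert v G')))"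
    using G by (simp add: koszul_diff_def koszul_boundary_def summand sum_distrib_left sum_negf)
  also have "\<dots> = f G"
    unfolding cycle by (simp add: mult.assoc[symmetric] koszul_sign_square)
  finally show ?thesis .
qed

lemma koszul_cycles_subset_boundaries:
  "(koszul_cycles X P i :: ('v set \<Rightarrow> 'r::comm_ring_1) set) \<subseteq> koszul_boundaries X P i"
proof
  fix f :: "'v set \<Rightarrow> 'r" assume f: "f \<in> koszul_cycles X P i"
  have "koszul_diff X P (Suc i) (lift f) G = f G" for G
  proof (cases "G \<in> level P i")
    case False
    then show ?thesis
      using f by (auto simp: koszul_diff_def koszul_cycles_def chains_on_def)
  next
    case True
    then show ?thesis
      using f koszul_diff_lift_apex_notin koszul_diff_lift_apex_in by blast
  qed
  then show "f \<in> koszul_boundaries X P i"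
    unfolding koszul_boundaries_def using lift_in_chains_on by (metis ext image_eqI)
qed

end

lemma koszul_cycles_0: "koszul_cycles X P 0 = chains_on (level P 0)"
  by (auto simp: koszul_cycles_def koszul_diff_def fun_eq_iff)

lemma rank_nullity_koszul:
  assumes "finite X" "P \<subseteq> Pow X"
  shows "fun_space.dim (koszul_cycles X P (Suc n) :: ('v::linorder set \<Rightarrow> 'r::field) set)
      + fun_space.dim (koszul_boundaries X P n :: ('v set \<Rightarrow> 'r) set) = card (level P (Suc n))"
  unfolding koszul_cycles_def koszul_boundaries_def
  by (rule rank_nullity_chains_on[OF linear_koszul_diff finite_level[OF assms]])

lemma dim_koszul_boundaries_le_cycles:
  assumes "finite X" "P \<subseteq> Pow X"
    and "(koszul_boundaries X P i :: ('v::linorder set \<Rightarrow> 'r::field) set) \<subseteq> koszul_cycles X P i"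
  shows "fun_space.dim (koszul_boundaries X P i :: ('v set \<Rightarrow> 'r) set) \<le> fun_space.dim (koszul_cycles X P i :: ('v set \<Rightarrow> 'r) set)"
proof (rule fun_space.dim_le_dim_if_subset_finite_span[OF assms(3)])
  show "koszul_cycles X P i \<subseteq> fun_space.span ((\<lambda>F. indicator {F} :: 'v set \<Rightarrow> 'r) ` level P i)"
    using chains_on_eq_span[OF finite_level[OF assms(1,2)], where 'r='r] by (auto simp: koszul_cycles_def)
qed (use finite_level[OF assms(1,2)] in simp)

lemma homology_dim_eq_0_if_exact:
  assumes "finite X" "P \<subseteq> Pow X"
    and "(koszul_cycles X P i :: ('v::linorder set \<Rightarrow> 'r::field) set) \<subseteq> koszul_boundaries X P i"
  shows "homology_dim TYPE('r) X P i = 0"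
proof -
  have "(koszul_boundaries X P i :: ('v set \<Rightarrow> 'r) set) \<subseteq> chains_on (level P i)"
    using koszul_diff_in_chains_on by (auto simp: koszul_boundaries_def)
  then have "koszul_boundaries X P i \<subseteq> fun_space.span ((\<lambda>F. indicator {F} :: 'v set \<Rightarrow> 'r) ` level P i)"
    using chains_on_eq_span[OF finite_level[OF assms(1,2)], where 'r='r] by simp
  then show ?thesis
    using fun_space.dim_le_dim_if_subset_finite_span[OF assms(3)] finite_level[OF assms(1,2)]
    by (simp add: homology_dim_def)
qed

lemma dim_koszul_boundaries_alternating_sum:
  assumes X: "finite X" and P: "P \<subseteq> Pow X" and closed: "interval_closed P"
    and exact: "\<And>k. k \<le> n \<Longrightarrow> (koszul_cycles X P k :: ('v::linorder set \<Rightarrow> 'r::field) set) \<subseteq> koszul_boundaries X P k"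
  shows "int (fun_space.dim (koszul_boundaries X P n :: ('v set \<Rightarrow> 'r) set))
    = (\<Sum>k\<le>n. (-1) ^ (n - k) * int (card (level P k)))"
  using exact
proof (induction n)
  case 0
  have "(koszul_boundaries X P 0 :: ('v set \<Rightarrow> 'r) set) = chains_on (level P 0)"
    using "0.prems"[of 0] koszul_boundaries_subset_cycles[OF X P closed] koszul_cycles_0 by blast
  then show ?case
    by (simp add: dim_chains_on finite_level[OF X P])
next
  case (Suc n)
  have "(koszul_boundaries X P (Suc n) :: ('v set \<Rightarrow> 'r) set) = koszul_cycles X P (Suc n)"
    using Suc.prems[of "Suc n"] koszul_boundaries_subset_cycles[OF X P closed] by blast
  then have "int (fun_space.dim (koszul_boundaries X P (Suc n) :: ('v set \<Rightarrow> 'r) set))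
      = int (card (level P (Suc n))) - int (fun_space.dim (koszul_boundaries X P n :: ('v set \<Rightarrow> 'r) set))"
    using rank_nullity_koszul[OF X P, of n, where 'r='r] by simp
  also have "\<dots> = int (card (level P (Suc n))) - (\<Sum>k\<le>n. (-1) ^ (n - k) * int (card (level P k)))"
    using Suc by simp
  also have "\<dots> = (\<Sum>k\<le>Suc n. (-1) ^ (Suc n - k) * int (card (level P k)))"
    by (simp add: Suc_diff_le sum_negf[symmetric])
  finally show ?case .
qed

(* For the complete multipartite hypergraph, the Koszul family of the squarefree multidegree 1_S. *)
definition non_edge_complements :: "'v set \<Rightarrow> nat \<Rightarrow> ('i \<Rightarrow> 'v set) \<Rightarrow> 'i set \<Rightarrow> 'v set set" where
  "non_edge_complements S d B I = {F. F \<subseteq> S \<and> (card (S - F) < d \<or> (\<exists>s\<in>I. S - F \<subseteq> B s))}"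

lemma interval_closed_Pow: "interval_closed (Pow S)"
  by (auto simp: interval_closed_def)

lemma non_edge_complements_subset_Pow: "S \<subseteq> X \<Longrightarrow> non_edge_complements S d B I \<subseteq> Pow X"
  by (auto simp: non_edge_complements_def)

lemma interval_closed_non_edge_complements:
  assumes "finite S"
  shows "interval_closed (non_edge_complements S d B I)"
  unfolding interval_closed_def
proof (intro allI impI)
  fix G M H
  assume G: "G \<in> non_edge_complements S d B I" and H: "H \<in> non_edge_complements S d B I"
    and "G \<subseteq> M" "M \<subseteq> H"
  then have "M \<subseteq> S" "S - M \<subseteq> S - G"
    by (auto simp: non_edge_complements_def)
  moreover have "card (S - M) \<le> card (S - G)"
    using \<open>S - M \<subseteq> S - G\<close> assms by (simp add: card_mono)
  ultimately show "M \<in> non_edge_complements S d B I"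
    using G unfolding non_edge_complements_def by fastforce
qed

lemma koszul_exact_Pow:
  assumes X: "finite X" and SX: "S \<subseteq> X" and S: "S \<noteq> {}"
  shows "(koszul_cycles X (Pow S) i :: ('v::linorder set \<Rightarrow> 'r::field) set) \<subseteq> koszul_boundaries X (Pow S) i"
proof -
  have "Min S \<in> S"
    using X SX S by (simp add: finite_subset)
  then interpret koszul_contraction X "Pow S" i "\<lambda>_. Min S"
    using X SX by unfold_locales (auto simp: level_def)
  show ?thesis
    by (rule koszul_cycles_subset_boundaries)
qed

lemma koszul_exact_non_edge_complements_high:
  assumes X: "finite X" and SX: "S \<subseteq> X" and S: "S \<noteq> {}" and high: "card S + 2 \<le> i + d" and d: "d > 0"
  shows "(koszul_cycles X (non_edge_complements S d B I) i :: ('v::linorder set \<Rightarrow> 'r::field) set)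
    \<subseteq> koszul_boundaries X (non_edge_complements S d B I) i"
proof -
  let ?Q = "non_edge_complements S d B I"
  have fS: "finite S"
    using X SX finite_subset by blast
  have v0: "Min S \<in> S"
    using fS S by simp
  have mem_Q: "F \<in> ?Q" if "F \<subseteq> S" "card F + 1 \<ge> i" for F
  proof -
    have "card (S - F) = card S - card F"
      using that fS by (simp add: card_Diff_subset finite_subset)
    then show ?thesis
      using that high d by (auto simp: non_edge_complements_def)
  qed
  have level: "G \<subseteq> S \<and> finite G \<and> card G = i" if "G \<in> level ?Q i" for G
    using that fS by (auto simp: level_def non_edge_complements_def finite_subset)
  interpret koszul_contraction X ?Q i "\<lambda>_. Min S"
  proof unfold_locales
    fix G assume G: "G \<in> level ?Q i"
    then show "Min S \<notin> G \<Longrightarrow> Min S \<in> X \<and> insert (Min S) G \<in> ?Q"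
      using level[OF G] v0 SX by (intro conjI mem_Q) auto
    assume "Min S \<in> G"
    then have "G - {Min S} \<in> ?Q"
      using level[OF G] by (intro mem_Q) auto
    moreover have "insert v G \<in> ?Q" if "v \<in> X - G" "insert v (G - {Min S}) \<in> ?Q" for v
      using that level[OF G] by (intro mem_Q) (auto simp: non_edge_complements_def)
    ultimately show "G - {Min S} \<in> ?Q \<and> (\<forall>v\<in>X - G. insert v (G - {Min S}) \<in> ?Q \<longrightarrow> insert v G \<in> ?Q)"
      by blast
  qed (use X SX in \<open>auto simp: non_edge_complements_def\<close>)
  show ?thesis
    by (rule koszul_cycles_subset_boundaries)
qed

lemma the_disjoint_family_index_eq:
  assumes "disjoint_family_on B I" "s \<in> I" "T \<subseteq> B s" "T \<noteq> {}"
  shows "(THE s. s \<in> I \<and> T \<subseteq> B s) = s"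
proof (rule the_equality)
  fix s' assume "s' \<in> I \<and> T \<subseteq> B s'"
  then show "s' = s"
    using assms unfolding disjoint_family_on_def by blast
qed (use assms in simp)

lemma non_edge_complements_low_level_block:
  assumes "finite S" "G \<in> level (non_edge_complements S d B I) i" "i + d \<le> card S" "d \<ge> 2"
  obtains s where "s \<in> I" "S - G \<subseteq> B s" "\<And>v. S - insert v G \<noteq> {}"
proof -
  have "G \<subseteq> S" "card G = i" "G \<in> non_edge_complements S d B I"
    using assms(2) by (auto simp: level_def non_edge_complements_def)
  then have large: "card (S - G) \<ge> d"
    using assms by (simp add: card_Diff_subset finite_subset)
  then obtain s where "s \<in> I" "S - G \<subseteq> B s"
    using \<open>G \<in> non_edge_complements S d B I\<close> by (auto simp: non_edge_complements_def)
  moreover have "S - insert v G \<noteq> {}" for v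
  proof
    assume "S - insert v G = {}"
    then have "card (S - G) \<le> card {v}"
      by (intro card_mono) auto
    then show False
      using large assms(4) by simp
  qed
  ultimately show ?thesis
    using that by blast
qed

lemma koszul_exact_non_edge_complements_low:
  assumes X: "finite X" and SX: "S \<subseteq> X" and disj: "disjoint_family_on B I"
    and low: "i + d \<le> card S" and d: "d \<ge> 2"
  shows "(koszul_cycles X (non_edge_complements S d B I) i :: ('v::linorder set \<Rightarrow> 'r::field) set)
    \<subseteq> koszul_boundaries X (non_edge_complements S d B I) i"
proof -
  let ?Q = "non_edge_complements S d B I"
  have fS: "finite S"
    using X SX finite_subset by blast
  define c where "c G = Min (S \<inter> B (THE s. s \<in> I \<and> S - G \<subseteq> B s))" for G
  have apex: "\<exists>s\<in>I. S - G \<subseteq> B s \<and> c G \<in> S \<inter> B s \<and> (\<forall>v\<in>S - G. c (insert v G) = c G)"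
    if G: "G \<in> level ?Q i" for G
  proof -
    obtain s where s: "s \<in> I" "S - G \<subseteq> B s" and ne: "\<And>v. S - insert v G \<noteq> {}"
      using non_edge_complements_low_level_block[OF fS G low d] by blast
    have "S - G \<noteq> {}"
      using ne by blast
    then have "c G = Min (S \<inter> B s)"
      unfolding c_def using the_disjoint_family_index_eq[OF disj s] by simp
    moreover have "c (insert v G) = Min (S \<inter> B s)" for v
      unfolding c_def using the_disjoint_family_index_eq[OF disj s(1) _ ne[of v]] s(2) by auto
    moreover have "Min (S \<inter> B s) \<in> S \<inter> B s"
      using s fS \<open>S - G \<noteq> {}\<close> by (intro Min_in) auto
    ultimately show ?thesis
      using s by auto
  qed
  interpret koszul_contraction X ?Q i c
  proof unfold_locales
    fix G v assume "G \<in> level ?Q i" "v \<in> X - G" "insert v G \<in> ?Q"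
    then show "c (insert v G) = c G"
      using apex by (auto simp: non_edge_complements_def)
  next
    fix G assume G: "G \<in> level ?Q i"
    then obtain s where s: "s \<in> I" "S - G \<subseteq> B s" "c G \<in> S \<inter> B s"
      using apex by blast
    have "G \<subseteq> S"
      using G by (auto simp: level_def non_edge_complements_def)
    then show "c G \<notin> G \<Longrightarrow> c G \<in> X \<and> insert (c G) G \<in> ?Q"
      and "c G \<in> G \<Longrightarrow> G - {c G} \<in> ?Q \<and> (\<forall>v\<in>X - G. insert v (G - {c G}) \<in> ?Q \<longrightarrow> insert v G \<in> ?Q)"
      using s SX by (auto simp: non_edge_complements_def)
  qed (use X SX in \<open>auto simp: non_edge_complements_def\<close>)
  show ?thesis
    by (rule koszul_cycles_subset_boundaries)
qed

lemma alternating_sum_binomial: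
  fixes p m n :: nat
  assumes "p \<le> m" "n < m"
  shows "(\<Sum>k\<le>n. (-1) ^ (n - k) * int (p choose (m - k)))
    = (if p = 0 then 0 else int ((p - 1) choose (m - Suc n)))"
  using assms(2)
proof (induction n)
  case 0
  then show ?case
    using assms(1) by (cases "p = m") (auto simp: binomial_eq_0)
next
  case (Suc n)
  then obtain j where j: "m - Suc n = Suc j" "m - Suc (Suc n) = j"
    by (metis Suc_diff_Suc diff_Suc_1 diff_Suc_eq_diff_pred)
  have "(\<Sum>k\<le>Suc n. (-1) ^ (Suc n - k) * int (p choose (m - k)))
      = int (p choose (m - Suc n)) - (\<Sum>k\<le>n. (-1) ^ (n - k) * int (p choose (m - k)))"
    by (simp add: Suc_diff_le sum_negf[symmetric])
  also have "\<dots> = (if p = 0 then 0 else int ((p - 1) choose (m - Suc (Suc n))))"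
    using Suc j by (cases p) auto
  finally show ?case .
qed

lemma card_level_Pow: "finite S \<Longrightarrow> card (level (Pow S) k) = card S choose k"
  by (simp add: level_def n_subsets Pow_def conj_commute)

lemma level_non_edge_complements_high:
  assumes "finite S" "card S < k + d"
  shows "level (non_edge_complements S d B I) k = level (Pow S) k"
proof -
  have "card (S - F) < d" if "F \<subseteq> S" "card F = k" for F
  proof -
    have "card (S - F) = card S - k" "k \<le> card S"
      using that assms(1) by (auto simp: card_Diff_subset finite_subset card_mono)
    then show ?thesis
      using assms(2) by linarith
  qed
  then show ?thesis
    by (auto simp: level_def non_edge_complements_def)
qed

lemma card_level_non_edge_complements_low:
  assumes S: "finite S" and I: "finite I" and disj: "disjoint_family_on B I"
    and d: "d \<ge> 1" and low: "k + d \<le> card S"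
  shows "card (level (non_edge_complements S d B I) k) = (\<Sum>s\<in>I. card (S \<inter> B s) choose (card S - k))"
proof -
  define T where "T s = {U. U \<subseteq> S \<inter> B s \<and> card U = card S - k}" for s
  have card_compl: "card (S - F) = card S - card F" if "F \<subseteq> S" for F
    using that S by (simp add: card_Diff_subset finite_subset)
  have "bij_betw (\<lambda>F. S - F) (level (non_edge_complements S d B I) k) (\<Union>s\<in>I. T s)"
  proof (rule bij_betw_byWitness[where f' = "\<lambda>U. S - U"])
    show "(\<lambda>F. S - F) ` level (non_edge_complements S d B I) k \<subseteq> (\<Union>s\<in>I. T s)"
      using low by (auto simp: level_def non_edge_complements_def T_def card_compl)
    show "(\<lambda>U. S - U) ` (\<Union>s\<in>I. T s) \<subseteq> level (non_edge_complements S d B I) k"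
    proof
      fix F assume "F \<in> (\<lambda>U. S - U) ` (\<Union>s\<in>I. T s)"
      then obtain s U where "s \<in> I" "U \<subseteq> S \<inter> B s" "card U = card S - k" "F = S - U"
        by (auto simp: T_def)
      moreover have "card (S - U) = k"
        using calculation low card_compl[of U] by simp
      ultimately show "F \<in> level (non_edge_complements S d B I) k"
        by (auto simp: level_def non_edge_complements_def Diff_Diff_Int Int_absorb1)
    qed
  qed (auto simp: level_def non_edge_complements_def T_def)
  then have "card (level (non_edge_complements S d B I) k) = card (\<Union>s\<in>I. T s)"
    by (rule bij_betw_same_card)
  also have "\<dots> = (\<Sum>s\<in>I. card (T s))"
  proof (rule card_UN_disjoint'[OF _ _ I])
    show "disjoint_family_on T I"
      unfolding disjoint_family_on_def
    proof (intro ballI impI)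
      fix s s' assume "s \<in> I" "s' \<in> I" "s \<noteq> s'"
      then have "B s \<inter> B s' = {}"
        using disj by (simp add: disjoint_family_onD)
      moreover have "card S - k \<noteq> 0"
        using low d by simp
      ultimately show "T s \<inter> T s' = {}"
        unfolding T_def by (auto simp: disjoint_iff subset_iff)
    qed
  qed (use S in \<open>simp add: T_def\<close>)
  also have "\<dots> = (\<Sum>s\<in>I. card (S \<inter> B s) choose (card S - k))"
    using S by (intro sum.cong refl) (unfold T_def, rule n_subsets, simp)
  finally show ?thesis .
qed

lemma koszul_exact_if_level_empty:
  assumes "level P i = {}"
  shows "(koszul_cycles X P i :: ('v::linorder set \<Rightarrow> 'r::comm_ring_1) set) \<subseteq> koszul_boundaries X P i"
proof -
  have "koszul_cycles X P i \<subseteq> {0 :: 'v set \<Rightarrow> 'r}"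
    using assms by (auto simp: koszul_cycles_def chains_on_def)
  moreover have "(0 :: 'v set \<Rightarrow> 'r) = koszul_diff X P (Suc i) 0" "0 \<in> chains_on (level P (Suc i))"
    by (auto simp: koszul_diff_def koszul_boundary_def chains_on_def fun_eq_iff)
  ultimately show ?thesis
    unfolding koszul_boundaries_def by blast
qed

lemma koszul_boundaries_cong:
  "level P i = level P' i \<Longrightarrow> level P (Suc i) = level P' (Suc i) \<Longrightarrow>
    koszul_boundaries X P i = koszul_boundaries X P' i"
  by (simp add: koszul_boundaries_def koszul_diff_def)

lemma dim_koszul_boundaries_Pow:
  assumes X: "finite X" and SX: "S \<subseteq> X" and n: "n < card S"
  shows "int (fun_space.dim (koszul_boundaries X (Pow S) n :: ('v::linorder set \<Rightarrow> 'r::field) set))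
    = int ((card S - 1) choose (card S - Suc n))"
proof -
  have fS: "finite S" and "S \<noteq> {}"
    using X SX n finite_subset by auto
  then have "int (fun_space.dim (koszul_boundaries X (Pow S) n :: ('v set \<Rightarrow> 'r) set))
      = (\<Sum>k\<le>n. (-1) ^ (n - k) * int (card (level (Pow S) k)))"
    using SX by (intro dim_koszul_boundaries_alternating_sum X interval_closed_Pow koszul_exact_Pow) auto
  also have "\<dots> = (\<Sum>k\<le>n. (-1) ^ (n - k) * int (card S choose (card S - k)))"
    using n fS by (intro sum.cong refl) (simp add: card_level_Pow binomial_symmetric[symmetric])
  also have "\<dots> = int ((card S - 1) choose (card S - Suc n))"
    using n by (simp add: alternating_sum_binomial)
  finally show ?thesis .
qed

lemma dim_koszul_boundaries_non_edge_complements: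
  assumes X: "finite X" and SX: "S \<subseteq> X" and I: "finite I" and disj: "disjoint_family_on B I"
    and d: "d \<ge> 2" and low: "n + d \<le> card S"
  shows "int (fun_space.dim (koszul_boundaries X (non_edge_complements S d B I) n
      :: ('v::linorder set \<Rightarrow> 'r::field) set))
    = (\<Sum>s\<in>I. int ((card (S \<inter> B s) - 1) choose (card S - Suc n)))"
proof -
  let ?Q = "non_edge_complements S d B I"
  have fS: "finite S"
    using X SX finite_subset by blast
  have "int (fun_space.dim (koszul_boundaries X ?Q n :: ('v set \<Rightarrow> 'r) set))
      = (\<Sum>k\<le>n. (-1) ^ (n - k) * int (card (level ?Q k)))"
    using low by (intro dim_koszul_boundaries_alternating_sum X non_edge_complements_subset_Pow SX
        interval_closed_non_edge_complements fS koszul_exact_non_edge_complements_low disj d) auto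
  also have "\<dots> = (\<Sum>k\<le>n. (-1) ^ (n - k) * (\<Sum>s\<in>I. int (card (S \<inter> B s) choose (card S - k))))"
    using low d by (intro sum.cong refl) (simp add: card_level_non_edge_complements_low[OF fS I disj])
  also have "\<dots> = (\<Sum>s\<in>I. \<Sum>k\<le>n. (-1) ^ (n - k) * int (card (S \<inter> B s) choose (card S - k)))"
    by (simp add: sum_distrib_left sum.swap[of _ "{..n}" I])
  also have "\<dots> = (\<Sum>s\<in>I. int ((card (S \<inter> B s) - 1) choose (card S - Suc n)))"
  proof (intro sum.cong refl)
    fix s
    have "card (S \<inter> B s) \<le> card S"
      using fS by (simp add: card_mono)
    moreover have "0 < card S - Suc n"
      using low d by simp
    ultimately show "(\<Sum>k\<le>n. (-1) ^ (n - k) * int (card (S \<inter> B s) choose (card S - k)))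
        = int ((card (S \<inter> B s) - 1) choose (card S - Suc n))"
      using low d by (simp add: alternating_sum_binomial)
  qed
  finally show ?thesis .
qed

lemma homology_dim_non_edge_complements_off_critical:
  fixes S :: "'v::linorder set"
  assumes X: "finite X" and SX: "S \<subseteq> X" and disj: "disjoint_family_on B I"
    and d: "d \<ge> 2" and i: "i \<ge> 1" and off: "card S \<noteq> i + d - 1"
  shows "homology_dim TYPE('r::field) X (non_edge_complements S d B I) i = 0"
proof (rule homology_dim_eq_0_if_exact[OF X non_edge_complements_subset_Pow[OF SX]])
  consider "S = {}" | "S \<noteq> {}" "card S + 2 \<le> i + d" | "i + d \<le> card S"
    using off d i by linarith
  then show "(koszul_cycles X (non_edge_complements S d B I) i :: ('v set \<Rightarrow> 'r) set)
      \<subseteq> koszul_boundaries X (non_edge_complements S d B I) i"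
  proof cases
    case 1
    then have "level (non_edge_complements S d B I) i = {}"
      using i by (auto simp: level_def non_edge_complements_def)
    then show ?thesis
      by (rule koszul_exact_if_level_empty)
  next
    case 2
    then show ?thesis
      using d by (intro koszul_exact_non_edge_complements_high X SX) auto
  next
    case 3
    then show ?thesis
      by (rule koszul_exact_non_edge_complements_low[OF X SX disj _ d])
  qed
qed

lemma homology_dim_non_edge_complements_critical:
  fixes S :: "'v::linorder set"
  assumes X: "finite X" and SX: "S \<subseteq> X" and I: "finite I" and disj: "disjoint_family_on B I"
    and d: "d \<ge> 2" and i: "i \<ge> 1" and critical: "card S = i + d - 1"
  shows "int (homology_dim TYPE('r::field) X (non_edge_complements S d B I) i)
    = int ((card S - 1) choose (d - 1)) - (\<Sum>s\<in>I. int ((card (S \<inter> B s) - 1) choose (d - 1)))"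
proof -
  let ?Q = "non_edge_complements S d B I"
  let ?dim = "\<lambda>V. int (fun_space.dim (V :: ('v set \<Rightarrow> 'r) set))"
  obtain n where n: "i = Suc n"
    using i by (cases i) auto
  have fS: "finite S"
    using X SX finite_subset by blast
  have Q: "?Q \<subseteq> Pow X"
    using SX by (rule non_edge_complements_subset_Pow)
  have level_i: "level ?Q i = level (Pow S) i" and level_Suc_i: "level ?Q (Suc i) = level (Pow S) (Suc i)"
    using critical d by (auto intro!: level_non_edge_complements_high fS)
  have "(koszul_boundaries X ?Q i :: ('v set \<Rightarrow> 'r) set) \<subseteq> koszul_cycles X ?Q i"
    by (rule koszul_boundaries_subset_cycles[OF X Q interval_closed_non_edge_complements[OF fS]])
  then have "fun_space.dim (koszul_boundaries X ?Q i :: ('v set \<Rightarrow> 'r) set)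
      \<le> fun_space.dim (koszul_cycles X ?Q i :: ('v set \<Rightarrow> 'r) set)"
    by (rule dim_koszul_boundaries_le_cycles[OF X Q])
  then have "int (homology_dim TYPE('r) X ?Q i) = ?dim (koszul_cycles X ?Q i) - ?dim (koszul_boundaries X ?Q i)"
    by (simp add: homology_dim_def of_nat_diff)
  also have "?dim (koszul_cycles X ?Q i) = int (card S choose i) - ?dim (koszul_boundaries X ?Q n)"
    using rank_nullity_koszul[OF X Q, of n, where 'r='r] level_i card_level_Pow[OF fS] n by simp
  also have "?dim (koszul_boundaries X ?Q n) = (\<Sum>s\<in>I. int ((card (S \<inter> B s) - 1) choose (d - 1)))"
    using dim_koszul_boundaries_non_edge_complements[OF X SX I disj d, of n, where 'r='r] critical d n
    by (simp add: Suc_diff_Suc)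
  also have "?dim (koszul_boundaries X ?Q i) = int ((card S - 1) choose (d - 2))"
  proof -
    have "(koszul_boundaries X ?Q i :: ('v set \<Rightarrow> 'r) set) = koszul_boundaries X (Pow S) i"
      by (rule koszul_boundaries_cong[OF level_i level_Suc_i])
    moreover have "i < card S" "card S - Suc i = d - 2"
      using critical d by auto
    ultimately show ?thesis
      using dim_koszul_boundaries_Pow[OF X SX, of i, where 'r='r] by simp
  qed
  also have "card S choose i = ((card S - 1) choose (d - 2)) + ((card S - 1) choose (d - 1))"
  proof -
    have "card S choose i = card S choose (d - 1)"
      using critical d binomial_symmetric[of i "card S"] by simp
    moreover have "d - 1 - 1 = d - 2"
      by simp
    ultimately show ?thesis
      using critical d i choose_reduce_nat[of "card S" "d - 1"] by simp
  qed
  finally show ?thesis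
    by simp
qed

definition koszul_family :: "'v set \<Rightarrow> 'v set set \<Rightarrow> ('v \<Rightarrow> nat) \<Rightarrow> 'v set set" where
  "koszul_family X H a = {F. F \<subseteq> X \<and> (\<forall>v\<in>F. 1 \<le> a v) \<and>
     \<not> mono_in_edge_ideal H (\<lambda>v. if v \<in> F then a v - 1 else a v)}"

lemma koszul_family_subset_Pow: "koszul_family X H a \<subseteq> Pow X"
  by (auto simp: koszul_family_def)

lemma kbasis_eq_level: "kbasis X H a i = level (koszul_family X H a) i"
  by (auto simp: kbasis_def level_def koszul_family_def)

lemma kchains_eq_chains_on: "kchains X H a i = chains_on (level (koszul_family X H a) i)"
  by (simp add: kchains_def chains_on_def kbasis_eq_level)

lemma kdiff_eq_koszul_diff:
  assumes "f \<in> kchains X H a i"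
  shows "kdiff X H a i f = koszul_diff X (koszul_family X H a) i f"
proof -
  have "(if insert v G \<in> level (koszul_family X H a) i then (-1) ^ card {u\<in>G. u < v} * f (insert v G) else 0)
      = koszul_sign G v * f (insert v G)" for G v
    using assms by (auto simp: kchains_eq_chains_on chains_on_def koszul_sign_def)
  then show ?thesis
    by (simp add: kdiff_def koszul_diff_def koszul_boundary_def kbasis_eq_level fun_eq_iff)
qed

lemma tor_dim_eq_homology_dim:
  fixes X :: "'v::linorder set"
  shows "tor_dim TYPE('r::field) X H i a = homology_dim TYPE('r) X (koszul_family X H a) i"
proof -
  have "{f \<in> (kchains X H a i :: ('v set \<Rightarrow> 'r) set). kdiff X H a i f = 0} = koszul_cycles X (koszul_family X H a) i"
    by (auto simp: koszul_cycles_def kchains_eq_chains_on kdiff_eq_koszul_diff[symmetric])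
  moreover have "kdiff X H a (Suc i) ` (kchains X H a (Suc i) :: ('v set \<Rightarrow> 'r) set)
      = koszul_boundaries X (koszul_family X H a) i"
    unfolding koszul_boundaries_def kchains_eq_chains_on[symmetric]
    by (rule image_cong[OF refl kdiff_eq_koszul_diff])
  ultimately show ?thesis
    by (simp add: tor_dim_def homology_dim_def)
qed

lemma koszul_family_remove_vertex:
  assumes "a z \<ge> 2" "z \<in> X"
  shows "F \<in> koszul_family X H a \<longleftrightarrow> F - {z} \<in> koszul_family X H a"
proof -
  have "(1 \<le> (if v \<in> F then a v - 1 else a v)) \<longleftrightarrow> (1 \<le> (if v \<in> F - {z} then a v - 1 else a v))" for v
    using assms(1) by auto
  then have "mono_in_edge_ideal H (\<lambda>v. if v \<in> F then a v - 1 else a v)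
      \<longleftrightarrow> mono_in_edge_ideal H (\<lambda>v. if v \<in> F - {z} then a v - 1 else a v)"
    by (simp add: mono_in_edge_ideal_def)
  moreover have "(\<forall>v\<in>F. 1 \<le> a v) \<longleftrightarrow> (\<forall>v\<in>F - {z}. 1 \<le> a v)" "F \<subseteq> X \<longleftrightarrow> F - {z} \<subseteq> X"
    using assms by auto
  ultimately show ?thesis
    unfolding koszul_family_def by blast
qed

lemma tor_dim_eq_0_if_not_squarefree:
  fixes X :: "'v::linorder set"
  assumes X: "finite X" and z: "z \<in> X" "a z \<ge> 2"
  shows "tor_dim TYPE('r::field) X H i a = 0"
proof -
  let ?P = "koszul_family X H a"
  have remove: "F \<in> ?P \<longleftrightarrow> F - {z} \<in> ?P" for F
    using z by (intro koszul_family_remove_vertex) auto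
  interpret koszul_contraction X ?P i "\<lambda>_. z"
  proof unfold_locales
    fix G assume "G \<in> level ?P i"
    then have G: "G \<in> ?P"
      by (simp add: level_def)
    show "z \<notin> G \<Longrightarrow> z \<in> X \<and> insert z G \<in> ?P"
      using remove[of "insert z G"] G z(1) by simp
    assume "z \<in> G"
    have "insert v G \<in> ?P" if "v \<in> X - G" "insert v (G - {z}) \<in> ?P" for v
    proof -
      have "insert v G - {z} = insert v (G - {z})"
        using that \<open>z \<in> G\<close> by auto
      then show ?thesis
        using remove[of "insert v G"] that(2) by simp
    qed
    then show "G - {z} \<in> ?P \<and> (\<forall>v\<in>X - G. insert v (G - {z}) \<in> ?P \<longrightarrow> insert v G \<in> ?P)"
      using remove[of G] G by blast
  qed (use X koszul_family_subset_Pow in blast)+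
  show ?thesis
    unfolding tor_dim_eq_homology_dim
    by (rule homology_dim_eq_0_if_exact[OF X koszul_family_subset_Pow koszul_cycles_subset_boundaries])
qed

lemma obtain_subset_with_card_containing_pair:
  assumes "finite T" "u \<in> T" "w \<in> T" "u \<noteq> w" "2 \<le> d" "d \<le> card T"
  obtains E where "E \<subseteq> T" "u \<in> E" "w \<in> E" "card E = d"
proof -
  have "card (T - {u, w}) = card T - 2"
    using assms(1-4) by (simp add: card_Diff_subset)
  then have "d - 2 \<le> card (T - {u, w})"
    using assms(6) by linarith
  then obtain R where R: "R \<subseteq> T - {u, w}" "card R = d - 2"
    by (rule obtain_subset_with_card_n)
  moreover have "finite R" "u \<notin> insert w R" "w \<notin> R"
    using R(1) assms(1,4) finite_subset by auto
  ultimately have "card (insert u (insert w R)) = d"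
    using assms(5) by simp
  moreover have "insert u (insert w R) \<subseteq> T"
    using R(1) assms(2,3) by blast
  ultimately show ?thesis
    using that by blast
qed

lemma complete_multipartite_edge_subset_iff:
  fixes B :: "nat \<Rightarrow> 'v set"
  assumes T: "T \<subseteq> (\<Union>s\<in>{1..t}. B s)" "finite T"
    and disj: "disjoint_family_on B {1..t}" and d: "d \<ge> 2"
  shows "(\<exists>E\<in>complete_multipartite_hg d t B. E \<subseteq> T) \<longleftrightarrow> d \<le> card T \<and> \<not> (\<exists>s\<in>{1..t}. T \<subseteq> B s)"
proof
  assume "\<exists>E\<in>complete_multipartite_hg d t B. E \<subseteq> T"
  then obtain E where "card E = d" "\<not> (\<exists>s\<in>{1..t}. E \<subseteq> B s)" "E \<subseteq> T"
    by (auto simp: complete_multipartite_hg_def)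
  then show "d \<le> card T \<and> \<not> (\<exists>s\<in>{1..t}. T \<subseteq> B s)"
    using T(2) card_mono by blast
next
  assume A: "d \<le> card T \<and> \<not> (\<exists>s\<in>{1..t}. T \<subseteq> B s)"
  then obtain u where u: "u \<in> T"
    using d by fastforce
  then obtain s where s: "s \<in> {1..t}" "u \<in> B s"
    using T(1) by blast
  obtain w where w: "w \<in> T" "w \<notin> B s"
    using A s by blast
  have "u \<noteq> w"
    using s w by blast
  then obtain E where E: "E \<subseteq> T" "u \<in> E" "w \<in> E" "card E = d"
    using obtain_subset_with_card_containing_pair[OF T(2) u w(1) _ d] A by blast
  have "\<not> E \<subseteq> B s'" if "s' \<in> {1..t}" for s'
  proof
    assume "E \<subseteq> B s'"
    then have "s' \<noteq> s"
      using E(3) w(2) by blast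
    then have "B s \<inter> B s' = {}"
      using disj s(1) that by (simp add: disjoint_family_onD)
    then show False
      using E(2) s(2) \<open>E \<subseteq> B s'\<close> by blast
  qed
  then have "E \<in> complete_multipartite_hg d t B"
    using E T(1) by (auto simp: complete_multipartite_hg_def)
  then show "\<exists>E\<in>complete_multipartite_hg d t B. E \<subseteq> T"
    using E(1) by blast
qed

lemma koszul_family_complete_multipartite_squarefree:
  fixes t :: nat and B :: "nat \<Rightarrow> 'v set"
  defines "X \<equiv> \<Union>s\<in>{1..t}. B s"
  assumes fin: "finite X" and disj: "disjoint_family_on B {1..t}" and d: "d \<ge> 2" and S: "S \<subseteq> X"
  shows "koszul_family X (complete_multipartite_hg d t B) (\<lambda>v. if v \<in> S then 1 else 0)
    = non_edge_complements S d B {1..t}"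
proof -
  have fS: "finite S"
    using fin S finite_subset by blast
  have "F \<in> koszul_family X (complete_multipartite_hg d t B) (\<lambda>v. if v \<in> S then 1 else 0)
      \<longleftrightarrow> F \<in> non_edge_complements S d B {1..t}" for F
  proof (cases "F \<subseteq> S")
    case True
    have "mono_in_edge_ideal (complete_multipartite_hg d t B)
        (\<lambda>v. if v \<in> F then (if v \<in> S then 1 else 0) - 1 else if v \<in> S then 1 else 0)
      \<longleftrightarrow> (\<exists>E\<in>complete_multipartite_hg d t B. E \<subseteq> S - F)"
      by (auto simp: mono_in_edge_ideal_def subset_iff)
    also have "\<dots> \<longleftrightarrow> d \<le> card (S - F) \<and> \<not> (\<exists>s\<in>{1..t}. S - F \<subseteq> B s)"
      using S fS unfolding X_def by (intro complete_multipartite_edge_subset_iff disj d) auto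
    finally show ?thesis
      using True S by (auto simp: koszul_family_def non_edge_complements_def)
  qed (auto simp: koszul_family_def non_edge_complements_def)
  then show ?thesis
    by blast
qed

lemma tor_dim_complete_multipartite_squarefree:
  fixes t :: nat and B :: "nat \<Rightarrow> 'v::linorder set"
  defines "X \<equiv> \<Union>s\<in>{1..t}. B s"
  assumes fin: "finite X" and disj: "disjoint_family_on B {1..t}" and d: "d \<ge> 2"
    and S: "S \<subseteq> X" and i: "i \<ge> 1"
  shows "int (tor_dim TYPE('r::field) X (complete_multipartite_hg d t B) i (\<lambda>v. if v \<in> S then 1 else 0))
    = (if card S = i + (d - 1)
       then int ((card S - 1) choose (d - 1)) - (\<Sum>s\<in>{1..t}. int ((card (S \<inter> B s) - 1) choose (d - 1)))
       else 0)"
  using homology_dim_non_edge_complements_critical[OF fin S _ disj d i, where 'r='r]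
    homology_dim_non_edge_complements_off_critical[OF fin S disj d i, where 'r='r] d
  unfolding tor_dim_eq_homology_dim koszul_family_complete_multipartite_squarefree[OF fin[unfolded X_def] disj d S[unfolded X_def], folded X_def]
  by simp

lemma finite_compositions:
  assumes "finite X"
  shows "finite {a :: 'a \<Rightarrow> nat. (\<forall>v. v \<notin> X \<longrightarrow> a v = 0) \<and> sum a X = j}"
proof (rule finite_subset)
  show "{a. (\<forall>v. v \<notin> X \<longrightarrow> a v = 0) \<and> sum a X = j}
      \<subseteq> {a. \<forall>v. (v \<in> X \<longrightarrow> a v \<in> {0..j}) \<and> (v \<notin> X \<longrightarrow> a v = 0)}"
    using assms by (auto intro: member_le_sum)
  show "finite {a. \<forall>v. (v \<in> X \<longrightarrow> a v \<in> {0..j}) \<and> (v \<notin> X \<longrightarrow> a v = (0 :: nat))}"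
    using assms by (intro finite_set_of_finite_funs) auto
qed

lemma card_subsets_with_block_sizes:
  fixes B :: "'i \<Rightarrow> 'v set"
  assumes I: "finite I" and fin: "\<And>s. s \<in> I \<Longrightarrow> finite (B s)" and disj: "disjoint_family_on B I"
  shows "card {S. S \<subseteq> (\<Union>s\<in>I. B s) \<and> (\<forall>s\<in>I. card (S \<inter> B s) = js s)} = (\<Prod>s\<in>I. card (B s) choose js s)"
proof -
  let ?T = "\<lambda>s. {U. U \<subseteq> B s \<and> card U = js s}"
  have "bij_betw (\<lambda>S. restrict (\<lambda>s. S \<inter> B s) I)
      {S. S \<subseteq> (\<Union>s\<in>I. B s) \<and> (\<forall>s\<in>I. card (S \<inter> B s) = js s)} (PiE I ?T)"
  proof (rule bij_betw_byWitness[where f' = "\<lambda>g. \<Union>s\<in>I. g s"])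
    have block: "(\<Union>s'\<in>I. g s') \<inter> B s = g s" if "g \<in> PiE I ?T" "s \<in> I" for g s
    proof -
      have "g s' \<inter> B s = {}" if "s' \<in> I" "s' \<noteq> s" for s'
        using \<open>g \<in> PiE I ?T\<close> \<open>s \<in> I\<close> that disj by (fastforce simp: disjoint_family_on_def)
      then show ?thesis
        using that by (auto simp: PiE_def Pi_def)
    qed
    show "\<forall>g\<in>PiE I ?T. restrict (\<lambda>s. (\<Union>s'\<in>I. g s') \<inter> B s) I = g"
      using block by (auto simp: PiE_def extensional_def fun_eq_iff)
    show "(\<lambda>g. \<Union>s\<in>I. g s) ` PiE I ?T \<subseteq> {S. S \<subseteq> (\<Union>s\<in>I. B s) \<and> (\<forall>s\<in>I. card (S \<inter> B s) = js s)}"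
      using block by (fastforce simp: PiE_def Pi_def)
  qed auto
  then show ?thesis
    using I fin by (simp add: bij_betw_same_card card_PiE n_subsets)
qed

lemma card_eq_sum_card_Int_blocks:
  fixes B :: "'i \<Rightarrow> 'v set"
  assumes "finite I" "\<And>s. s \<in> I \<Longrightarrow> finite (B s)" "disjoint_family_on B I" "S \<subseteq> (\<Union>s\<in>I. B s)"
  shows "card S = (\<Sum>s\<in>I. card (S \<inter> B s))"
proof -
  have "S = (\<Union>s\<in>I. S \<inter> B s)"
    using assms(4) by blast
  also have "card \<dots> = (\<Sum>s\<in>I. card (S \<inter> B s))"
    using assms(1-3) by (intro card_UN_disjoint') (auto simp: disjoint_family_on_def)
  finally show ?thesis .
qed

lemma sum_subsets_by_block_sizes:
  fixes B :: "'i \<Rightarrow> 'v set" and f :: "('i \<Rightarrow> nat) \<Rightarrow> 'a::comm_semiring_1"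
  assumes I: "finite I" and fin: "\<And>s. s \<in> I \<Longrightarrow> finite (B s)" and disj: "disjoint_family_on B I"
  shows "(\<Sum>S | S \<subseteq> (\<Union>s\<in>I. B s) \<and> card S = j. f (\<lambda>s. if s \<in> I then card (S \<inter> B s) else 0))
    = (\<Sum>js | (\<forall>s. s \<notin> I \<longrightarrow> js s = 0) \<and> sum js I = j. of_nat (\<Prod>s\<in>I. card (B s) choose js s) * f js)"
    (is "(\<Sum>S\<in>?Sj. f (?sizes S)) = (\<Sum>js\<in>?J. _)")
proof -
  have card_S: "card S = sum (?sizes S) I" if "S \<subseteq> (\<Union>s\<in>I. B s)" for S
    using card_eq_sum_card_Int_blocks[OF I fin disj that] by simp
  have fiber: "{S \<in> ?Sj. ?sizes S = js} = {S. S \<subseteq> (\<Union>s\<in>I. B s) \<and> (\<forall>s\<in>I. card (S \<inter> B s) = js s)}"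
    if "js \<in> ?J" for js
    using that card_S by (auto simp: fun_eq_iff)
  have "(\<Sum>S\<in>?Sj. f (?sizes S)) = (\<Sum>js\<in>?J. \<Sum>S\<in>{S \<in> ?Sj. ?sizes S = js}. f (?sizes S))"
  proof (rule sum.group[symmetric])
    show "finite ?Sj"
      using I fin by simp
    show "finite ?J"
      by (rule finite_compositions[OF I])
    show "?sizes ` ?Sj \<subseteq> ?J"
      using card_S by auto
  qed
  also have "\<dots> = (\<Sum>js\<in>?J. of_nat (card {S \<in> ?Sj. ?sizes S = js}) * f js)"
    by (intro sum.cong refl) simp
  also have "\<dots> = (\<Sum>js\<in>?J. of_nat (\<Prod>s\<in>I. card (B s) choose js s) * f js)"
  proof (rule sum.cong[OF refl])
    fix js assume "js \<in> ?J"
    show "of_nat (card {S \<in> ?Sj. ?sizes S = js}) * f js = of_nat (\<Prod>s\<in>I. card (B s) choose js s) * f js"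
      unfolding fiber[OF \<open>js \<in> ?J\<close>] by (simp add: card_subsets_with_block_sizes[OF I fin disj])
  qed
  finally show ?thesis .
qed

lemma exists_ge_2_if_not_indicator:
  fixes a :: "'v \<Rightarrow> nat"
  assumes "\<And>S. a \<noteq> (\<lambda>v. if v \<in> S then 1 else 0)"
  shows "\<exists>v. a v \<ge> 2"
proof (rule ccontr)
  assume "\<nexists>v. a v \<ge> 2"
  then have "a = (\<lambda>v. if v \<in> {v. a v = 1} then 1 else 0)"
    by (force simp: fun_eq_iff not_le less_2_cases_iff)
  then show False
    using assms by blast
qed

lemma betti_eq_sum_squarefree:
  fixes X :: "'v::linorder set"
  assumes X: "finite X"
  shows "betti TYPE('r::field) X H i j
    = (\<Sum>S | S \<subseteq> X \<and> card S = j. tor_dim TYPE('r) X H i (\<lambda>v. if v \<in> S then 1 else 0))"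
proof -
  let ?A = "{a. (\<forall>v. v \<notin> X \<longrightarrow> a v = 0) \<and> (\<Sum>v\<in>X. a v) = j}"
  define sqf where "sqf S = (\<lambda>v. if v \<in> S then 1 else 0 :: nat)" for S :: "'v set"
  have sum_sqf: "sum (sqf S) X = card S" if "S \<subseteq> X" for S
    using that X by (simp add: sqf_def sum.If_cases Int_absorb1)
  have inj: "inj_on sqf {S. S \<subseteq> X \<and> card S = j}"
    by (rule inj_onI) (auto simp: sqf_def fun_eq_iff split: if_splits)
  have image: "sqf ` {S. S \<subseteq> X \<and> card S = j} \<subseteq> ?A"
    using sum_sqf by (auto simp: sqf_def)
  have vanish: "tor_dim TYPE('r) X H i a = 0" if a: "a \<in> ?A - sqf ` {S. S \<subseteq> X \<and> card S = j}" for a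
  proof -
    have "a \<noteq> sqf S" for S
    proof
      assume "a = sqf S"
      moreover have "S \<subseteq> X"
        using a calculation by (auto simp: sqf_def split: if_splits)
      ultimately show False
        using a sum_sqf by auto
    qed
    then obtain v where "a v \<ge> 2"
      using exists_ge_2_if_not_indicator[of a] by (auto simp: sqf_def)
    moreover have "v \<in> X"
      using a \<open>a v \<ge> 2\<close> by (auto intro: ccontr)
    ultimately show ?thesis
      by (intro tor_dim_eq_0_if_not_squarefree X)
  qed
  have "betti TYPE('r) X H i j = (\<Sum>a\<in>sqf ` {S. S \<subseteq> X \<and> card S = j}. tor_dim TYPE('r) X H i a)"
    unfolding betti_def using vanish by (intro sum.mono_neutral_right[OF finite_compositions[OF X] image]) blast
  also have "\<dots> = (\<Sum>S | S \<subseteq> X \<and> card S = j. tor_dim TYPE('r) X H i (sqf S))"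
    by (rule sum.reindex[OF inj, unfolded comp_def])
  finally show ?thesis
    by (simp add: sqf_def)
qed

theorem theorem3p5:
  fixes t d :: nat and n :: "nat \<Rightarrow> nat" and B :: "nat \<Rightarrow> 'v::linorder set"
  assumes "t \<ge> 1" and "d \<ge> 2"
    and "\<And>s. s \<in> {1..t} \<Longrightarrow> n s \<ge> 1"
    and "\<And>s. s \<in> {1..t} \<Longrightarrow> finite (B s) \<and> card (B s) = n s"
    and "\<And>s s'. s \<in> {1..t} \<Longrightarrow> s' \<in> {1..t} \<Longrightarrow> s \<noteq> s' \<Longrightarrow> B s \<inter> B s' = {}"
    and "i \<ge> 1"
  shows "int (betti TYPE('k::field) (\<Union>s\<in>{1..t}. B s) (complete_multipartite_hg d t B) i j) =
    (if j = i + (d - 1) then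
       int ((\<Sum>s=1..t. n s) choose j) * int ((j - 1) choose (d - 1))
       - (\<Sum>js\<in>{js :: nat \<Rightarrow> nat. (\<forall>s. s \<notin> {1..t} \<longrightarrow> js s = 0) \<and> (\<Sum>s=1..t. js s) = j}.
            int (\<Prod>s=1..t. n s choose js s) * int (\<Sum>s=1..t. (js s - 1) choose (d - 1)))
     else 0)"
proof -
  let ?X = "\<Union>s\<in>{1..t}. B s"
  let ?g = "\<lambda>js :: nat \<Rightarrow> nat. int (\<Sum>s=1..t. (js s - 1) choose (d - 1))"
  have fin: "\<And>s. s \<in> {1..t} \<Longrightarrow> finite (B s)" and disj: "disjoint_family_on B {1..t}"
    using assms(4,5) by (auto simp: disjoint_family_on_def)
  then have finX: "finite ?X" and cardX: "card ?X = (\<Sum>s=1..t. n s)"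
    using assms(4) card_UN_disjoint'[OF disj fin] by auto
  have "int (betti TYPE('k) ?X (complete_multipartite_hg d t B) i j)
      = (\<Sum>S | S \<subseteq> ?X \<and> card S = j. if j = i + (d - 1)
           then int ((j - 1) choose (d - 1)) - ?g (\<lambda>s. if s \<in> {1..t} then card (S \<inter> B s) else 0) else 0)"
    unfolding betti_eq_sum_squarefree[OF finX] of_nat_sum
    using tor_dim_complete_multipartite_squarefree[OF finX disj assms(2) _ assms(6), where 'r='k]
    by (intro sum.cong refl) (auto simp: of_nat_sum)
  also have "\<dots> = (if j = i + (d - 1) then
       int ((\<Sum>s=1..t. n s) choose j) * int ((j - 1) choose (d - 1))
       - (\<Sum>js\<in>{js :: nat \<Rightarrow> nat. (\<forall>s. s \<notin> {1..t} \<longrightarrow> js s = 0) \<and> (\<Sum>s=1..t. js s) = j}.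
            int (\<Prod>s=1..t. n s choose js s) * ?g js)
     else 0)"
    using sum_subsets_by_block_sizes[OF _ fin disj, where j = j and f = ?g] finX cardX assms(4)
    by (cases "j = i + (d - 1)") (simp_all add: sum_subtractf n_subsets)
  finally show ?thesis .
qed

end
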